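(* The logic $\mathsf{MGrz}\vee\mathsf{LKur}$ (the smallest extension of $\mathsf{MS4}$ containing both $\mathsf{MGrz}$ and $\mathsf{LKur}$) is not a modal companion of $\mathsf{MIPC}$.
   Context: $\mathsf{MIPC}$ is the smallest set of formulas in the bimodal language $\mathcal{L}_{\forall\exists}$ containing all theorems of $\mathsf{IPC}$; $\forall(p\wedge q)\leftrightarrow(\forall p\wedge\forall q)$, $\forall p\to p$, $\forall p\to\forall\forall p$; $\exists(p\vee q)\leftrightarrow(\exists p\vee\exists q)$, $p\to\exists p$, $\exists\exists p\to\exists p$, $(\exists p\wedge\exists q)\to\exists(\exists p\wedge q)$; $\exists\forall p\to\forall p$, $\exists p\to\forall\exists p$; closed under modus ponens, substitution and $\varphi/\forall\varphi$. $\mathsf{MS4}$ is the smallest set of formulas in the classical bimodal language $\mathcal{L}_{\Box\forall}$ containing all classical tautologies, the $\mathsf{S4}$ axioms for $\Box$, the $\mathsf{S5}$ axioms for $\forall$, and $\Box\forall p\to\forall\Box p$, closed under modus ponens, substitution, $\Box$- and $\forall$-necessitation; extensions are such sets closed under these rules. $\Diamond=\neg\Box\neg$. $\mathsf{MGrz}=\mathsf{MS4}+\Box(\Box(p\to\Box p)\to p)\to p$, $\mathsf{LKur}=\mathsf{MS4}+\Box\forall\Diamond\Box p\to\Diamond\forall p$. Gödel translation: $\bot^t=\bot$, $p^t=\Box p$, $(\varphi\wedge\psi)^t=\varphi^t\wedge\psi^t$, $(\varphi\vee\psi)^t=\varphi^t\vee\psi^t$, $(\varphi\to\psi)^t=\Box(\neg\varphi^t\vee\psi^t)$,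 $(\forall\varphi)^t=\Box\forall\varphi^t$, $(\exists\varphi)^t=\exists\varphi^t$. An extension $\mathsf{M}$ of $\mathsf{MS4}$ is a modal companion of $\mathsf{MIPC}$ if for all $\varphi$: $\mathsf{MIPC}\vdash\varphi$ iff $\mathsf{M}\vdash\varphi^t$. *)

theory Defs
  imports Main
begin

datatype ifm =
    IVar nat | IBot | IAnd ifm ifm | IOr ifm ifm | IImp ifm ifm
  | IAll ifm | IEx ifm

definition IIff :: "ifm \<Rightarrow> ifm \<Rightarrow> ifm" where
  "IIff a b = IAnd (IImp a b) (IImp b a)"

fun isubst :: "(nat \<Rightarrow> ifm) \<Rightarrow> ifm \<Rightarrow> ifm" where
  "isubst s (IVar n) = s n"
| "isubst s IBot = IBot"
| "isubst s (IAnd a b) = IAnd (isubst s a) (isubst s b)"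
| "isubst s (IOr a b) = IOr (isubst s a) (isubst s b)"
| "isubst s (IImp a b) = IImp (isubst s a) (isubst s b)"
| "isubst s (IAll a) = IAll (isubst s a)"
| "isubst s (IEx a) = IEx (isubst s a)"

inductive ipc_ax :: "ifm \<Rightarrow> bool" where
  "ipc_ax (IImp a (IImp b a))"
| "ipc_ax (IImp (IImp a (IImp b c)) (IImp (IImp a b) (IImp a c)))"
| "ipc_ax (IImp (IAnd a b) a)"
| "ipc_ax (IImp (IAnd a b) b)"
| "ipc_ax (IImp a (IImp b (IAnd a b)))"
| "ipc_ax (IImp a (IOr a b))"
| "ipc_ax (IImp b (IOr a b))"
| "ipc_ax (IImp (IImp a c) (IImp (IImp b c) (IImp (IOr a b) c)))"
| "ipc_ax (IImp IBot a)"

inductive_set IPC :: "ifm set" where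
  "ipc_ax a \<Longrightarrow> a \<in> IPC"
| "a \<in> IPC \<Longrightarrow> IImp a b \<in> IPC \<Longrightarrow> b \<in> IPC"

abbreviation "ip \<equiv> IVar 0"
abbreviation "iq \<equiv> IVar 1"

definition mipc_axioms :: "ifm set" where
  "mipc_axioms = {
     IIff (IAll (IAnd ip iq)) (IAnd (IAll ip) (IAll iq)),
     IImp (IAll ip) ip,
     IImp (IAll ip) (IAll (IAll ip)),
     IIff (IEx (IOr ip iq)) (IOr (IEx ip) (IEx iq)),
     IImp ip (IEx ip),
     IImp (IEx (IEx ip)) (IEx ip),
     IImp (IAnd (IEx ip) (IEx iq)) (IEx (IAnd (IEx ip) iq)),
     IImp (IEx (IAll ip)) (IAll ip),
     IImp (IEx ip) (IAll (IEx ip)) }"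

inductive_set MIPC :: "ifm set" where
  ipc: "a \<in> IPC \<Longrightarrow> a \<in> MIPC"
| ax: "a \<in> mipc_axioms \<Longrightarrow> a \<in> MIPC"
| mp: "a \<in> MIPC \<Longrightarrow> IImp a b \<in> MIPC \<Longrightarrow> b \<in> MIPC"
| subst: "a \<in> MIPC \<Longrightarrow> isubst s a \<in> MIPC"
| gen: "a \<in> MIPC \<Longrightarrow> IAll a \<in> MIPC"

datatype mfm =
    MVar nat | MBot | MAnd mfm mfm | MOr mfm mfm | MImp mfm mfm
  | MBox mfm | MAll mfm

definition MNeg :: "mfm \<Rightarrow> mfm" where "MNeg a = MImp a MBot"
definition MDia :: "mfm \<Rightarrow> mfm" where "MDia a = MNeg (MBox (MNeg a))"
definition MEx :: "mfm \<Rightarrow> mfm" where "MEx a = MNeg (MAll (MNeg a))"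

fun msubst :: "(nat \<Rightarrow> mfm) \<Rightarrow> mfm \<Rightarrow> mfm" where
  "msubst s (MVar n) = s n"
| "msubst s MBot = MBot"
| "msubst s (MAnd a b) = MAnd (msubst s a) (msubst s b)"
| "msubst s (MOr a b) = MOr (msubst s a) (msubst s b)"
| "msubst s (MImp a b) = MImp (msubst s a) (msubst s b)"
| "msubst s (MBox a) = MBox (msubst s a)"
| "msubst s (MAll a) = MAll (msubst s a)"

fun beval :: "(mfm \<Rightarrow> bool) \<Rightarrow> mfm \<Rightarrow> bool" where
  "beval V (MVar n) = V (MVar n)"
| "beval V MBot = False"
| "beval V (MAnd a b) = (beval V a \<and> beval V b)"
| "beval V (MOr a b) = (beval V a \<or> beval V b)"
| "beval V (MImp a b) = (beval V a \<longrightarrow> beval V b)"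
| "beval V (MBox a) = V (MBox a)"
| "beval V (MAll a) = V (MAll a)"

definition tautology :: "mfm \<Rightarrow> bool" where
  "tautology a = (\<forall>V. beval V a)"

abbreviation "mp \<equiv> MVar 0"
abbreviation "mq \<equiv> MVar 1"

definition ms4_axioms :: "mfm set" where
  "ms4_axioms = {
     MImp (MBox (MImp mp mq)) (MImp (MBox mp) (MBox mq)),
     MImp (MBox mp) mp,
     MImp (MBox mp) (MBox (MBox mp)),
     MImp (MAll (MImp mp mq)) (MImp (MAll mp) (MAll mq)),
     MImp (MAll mp) mp,
     MImp (MEx mp) (MAll (MEx mp)),
     MImp (MBox (MAll mp)) (MAll (MBox mp)) }"

inductive_set MS4ext :: "mfm set \<Rightarrow> mfm set" for A :: "mfm set" where
  taut: "tautology a \<Longrightarrow> a \<in> MS4ext A"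
| ax: "a \<in> ms4_axioms \<Longrightarrow> a \<in> MS4ext A"
| extra: "a \<in> A \<Longrightarrow> a \<in> MS4ext A"
| mp: "a \<in> MS4ext A \<Longrightarrow> MImp a b \<in> MS4ext A \<Longrightarrow> b \<in> MS4ext A"
| subst: "a \<in> MS4ext A \<Longrightarrow> msubst s a \<in> MS4ext A"
| nec_box: "a \<in> MS4ext A \<Longrightarrow> MBox a \<in> MS4ext A"
| nec_all: "a \<in> MS4ext A \<Longrightarrow> MAll a \<in> MS4ext A"

definition MS4 :: "mfm set" where "MS4 = MS4ext {}"

definition grz_axiom :: mfm where
  "grz_axiom = MImp (MBox (MImp (MBox (MImp mp (MBox mp))) mp)) mp"

definition kur_axiom :: mfm where
  "kur_axiom = MImp (MBox (MAll (MDia (MBox mp)))) (MDia (MAll mp))"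

definition MGrz :: "mfm set" where "MGrz = MS4ext {grz_axiom}"
definition LKur :: "mfm set" where "LKur = MS4ext {kur_axiom}"

definition MGrz_join_LKur :: "mfm set" where
  "MGrz_join_LKur = MS4ext (MGrz \<union> LKur)"

fun gt :: "ifm \<Rightarrow> mfm" where
  "gt IBot = MBot"
| "gt (IVar n) = MBox (MVar n)"
| "gt (IAnd a b) = MAnd (gt a) (gt b)"
| "gt (IOr a b) = MOr (gt a) (gt b)"
| "gt (IImp a b) = MBox (MOr (MNeg (gt a)) (gt b))"
| "gt (IAll a) = MBox (MAll (gt a))"
| "gt (IEx a) = MEx (gt a)"

definition is_extension_MS4 :: "mfm set \<Rightarrow> bool" where
  "is_extension_MS4 M \<longleftrightarrow> MS4 \<subseteq> M \<and>
     (\<forall>a b. a \<in> M \<longrightarrow> MImp a b \<in> M \<longrightarrow> b \<in> M) \<and>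
     (\<forall>a s. a \<in> M \<longrightarrow> msubst s a \<in> M) \<and>
     (\<forall>a. a \<in> M \<longrightarrow> MBox a \<in> M) \<and>
     (\<forall>a. a \<in> M \<longrightarrow> MAll a \<in> M)"

definition modal_companion_MIPC :: "mfm set \<Rightarrow> bool" where
  "modal_companion_MIPC M \<longleftrightarrow> is_extension_MS4 M \<and>
     (\<forall>\<phi>. \<phi> \<in> MIPC \<longleftrightarrow> gt \<phi> \<in> M)"

end

theory Submission
  imports Defs
begin

(* Kuroda's principle \<forall>\<not>\<not>p \<rightarrow> \<not>\<not>\<forall>p separates the two logics. It fails in the
  intuitionistic Kripke model on the two-element chain (\<forall> ranging over both points, p true
  only at the top), so it is not in MIPC. Its Goedel translation amounts to
  \<box>\<forall>\<box>\<diamond>\<box>p \<rightarrow> \<box>\<diamond>\<box>\<forall>\<box>p, which MGrz \<or> LKur proves: T and 4 turn the premise into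
  \<box>\<forall>\<diamond>\<box>\<box>p, Kur yields \<diamond>\<forall>\<box>p and, by 4, \<box>\<diamond>\<forall>\<box>p; Grz implies the McKinsey
  axiom \<box>\<diamond>q \<rightarrow> \<diamond>\<box>q, which gives \<diamond>\<box>\<forall>\<box>p, and 4 boxes the result. *)

definition INeg :: "ifm \<Rightarrow> ifm" where "INeg a = IImp a IBot"

definition kuroda :: ifm where
  "kuroda = IImp (IAll (INeg (INeg ip))) (INeg (INeg (IAll ip)))"

(* Models of MIPC whose equivalence relation for \<forall> and \<exists> is the total one: the quantifiers
  range over all worlds. *)
fun sat :: "('w \<Rightarrow> 'w \<Rightarrow> bool) \<Rightarrow> (nat \<Rightarrow> 'w \<Rightarrow> bool) \<Rightarrow> 'w \<Rightarrow> ifm \<Rightarrow> bool" where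
  "sat R V w (IVar n) = V n w"
| "sat R V w IBot = False"
| "sat R V w (IAnd a b) = (sat R V w a \<and> sat R V w b)"
| "sat R V w (IOr a b) = (sat R V w a \<or> sat R V w b)"
| "sat R V w (IImp a b) = (\<forall>u. R w u \<longrightarrow> sat R V u a \<longrightarrow> sat R V u b)"
| "sat R V w (IAll a) = (\<forall>u. sat R V u a)"
| "sat R V w (IEx a) = (\<exists>u. sat R V u a)"

definition upward_closed :: "('w \<Rightarrow> 'w \<Rightarrow> bool) \<Rightarrow> (nat \<Rightarrow> 'w \<Rightarrow> bool) \<Rightarrow> bool" where
  "upward_closed R V \<longleftrightarrow> (\<forall>n w u. R w u \<longrightarrow> V n w \<longrightarrow> V n u)"

definition kripke_valid :: "('w \<Rightarrow> 'w \<Rightarrow> bool) \<Rightarrow> ifm \<Rightarrow> bool" where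
  "kripke_valid R a \<longleftrightarrow> (\<forall>V w. upward_closed R V \<longrightarrow> sat R V w a)"

lemma sat_persistent:
  assumes "transp R" "upward_closed R V" "R w u" "sat R V w a"
  shows "sat R V u a"
  using assms(3,4)
  by (induction a arbitrary: w u) (use assms(1,2) in \<open>auto simp: upward_closed_def dest: transpD\<close>)

lemma sat_isubst: "sat R V w (isubst s a) = sat R (\<lambda>n u. sat R V u (s n)) w a"
  by (induction a arbitrary: w) auto

lemma upward_closed_isubst:
  assumes "transp R" "upward_closed R V"
  shows "upward_closed R (\<lambda>n u. sat R V u (s n))"
  unfolding upward_closed_def using sat_persistent[OF assms] by blast

lemma kripke_valid_ipc_ax:
  assumes "reflp R" "transp R" "ipc_ax a"
  shows "kripke_valid R a"
  unfolding kripke_valid_def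
proof (intro allI impI)
  fix V w
  assume "upward_closed R V"
  then have persistent: "\<And>w u b. R w u \<Longrightarrow> sat R V w b \<Longrightarrow> sat R V u b"
    using sat_persistent[OF assms(2)] by blast
  have refl: "R w w" for w using assms(1) by (rule reflpD)
  have trans: "R u v \<Longrightarrow> R v x \<Longrightarrow> R u x" for u v x using assms(2) by (rule transpD)
  show "sat R V w a"
    using assms(3) by (induction, simp_all) (blast intro: refl persistent trans)+
qed

lemma kripke_valid_mp:
  assumes "reflp R" "kripke_valid R a" "kripke_valid R (IImp a b)"
  shows "kripke_valid R b"
  unfolding kripke_valid_def
proof (intro allI impI)
  fix V w
  assume "upward_closed R V"
  with assms(2,3) have "sat R V w a" "sat R V w (IImp a b)"
    unfolding kripke_valid_def by blast+
  with reflpD[OF assms(1)] show "sat R V w b" by simp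
qed

lemma kripke_valid_IPC: "a \<in> IPC \<Longrightarrow> reflp R \<Longrightarrow> transp R \<Longrightarrow> kripke_valid R a"
  by (induction rule: IPC.induct) (blast intro: kripke_valid_ipc_ax kripke_valid_mp)+

lemma kripke_valid_mipc_axioms: "reflp R \<Longrightarrow> a \<in> mipc_axioms \<Longrightarrow> kripke_valid R a"
  unfolding mipc_axioms_def kripke_valid_def by (auto simp: IIff_def dest: reflpD)

lemma kripke_valid_MIPC:
  assumes "reflp R" "transp R"
  shows "a \<in> MIPC \<Longrightarrow> kripke_valid R a"
proof (induction rule: MIPC.induct)
  case (ipc a)
  then show ?case using assms by (rule kripke_valid_IPC)
next
  case (ax a)
  then show ?case by (rule kripke_valid_mipc_axioms[OF assms(1)])
next
  case (mp a b)
  from assms(1) mp.IH show ?case by (rule kripke_valid_mp)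
next
  case (subst a s)
  then show ?case
    using upward_closed_isubst[OF assms(2)] by (auto simp: kripke_valid_def sat_isubst)
next
  case (gen a)
  then show ?case by (simp add: kripke_valid_def)
qed

lemma kuroda_not_kripke_valid: "\<not> kripke_valid ((\<le>) :: bool \<Rightarrow> bool \<Rightarrow> bool) kuroda"
proof -
  have "upward_closed (\<le>) (\<lambda>n w. w)" by (auto simp: upward_closed_def)
  moreover have "\<not> sat (\<le>) (\<lambda>n w. w) False kuroda"
    by (auto simp: kuroda_def INeg_def)
  ultimately show ?thesis unfolding kripke_valid_def by blast
qed

lemma kuroda_notin_MIPC: "kuroda \<notin> MIPC"
  using kripke_valid_MIPC[of "(\<le>) :: bool \<Rightarrow> bool \<Rightarrow> bool"] kuroda_not_kripke_valid by auto

lemma msubst_MNeg [simp]: "msubst s (MNeg a) = MNeg (msubst s a)"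
  by (simp add: MNeg_def)

lemma msubst_MDia [simp]: "msubst s (MDia a) = MDia (msubst s a)"
  by (simp add: MDia_def)

lemma MS4ext_taut_mp: "a \<in> MS4ext S \<Longrightarrow> tautology (MImp a b) \<Longrightarrow> b \<in> MS4ext S"
  by (blast intro: MS4ext.mp MS4ext.taut)

lemma MS4ext_taut_mp2:
  "a \<in> MS4ext S \<Longrightarrow> b \<in> MS4ext S \<Longrightarrow> tautology (MImp a (MImp b c)) \<Longrightarrow> c \<in> MS4ext S"
  by (blast intro: MS4ext.mp MS4ext.taut)

lemma MS4ext_imp_trans:
  "MImp a b \<in> MS4ext S \<Longrightarrow> MImp b c \<in> MS4ext S \<Longrightarrow> MImp a c \<in> MS4ext S"
  by (erule MS4ext_taut_mp2) (auto simp: tautology_def)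

lemma MS4ext_ms4_axiom_instance: "x \<in> ms4_axioms \<Longrightarrow> msubst s x \<in> MS4ext S"
  by (intro MS4ext.subst MS4ext.ax)

lemma MS4ext_box_K: "MImp (MBox (MImp a b)) (MImp (MBox a) (MBox b)) \<in> MS4ext S"
  using MS4ext_ms4_axiom_instance[of "MImp (MBox (MImp mp mq)) (MImp (MBox mp) (MBox mq))"
      "\<lambda>n. if n = 0 then a else b"]
  by (simp add: ms4_axioms_def)

lemma MS4ext_box_T: "MImp (MBox a) a \<in> MS4ext S"
  using MS4ext_ms4_axiom_instance[of "MImp (MBox mp) mp" "\<lambda>_. a"]
  by (simp add: ms4_axioms_def)

lemma MS4ext_box_4: "MImp (MBox a) (MBox (MBox a)) \<in> MS4ext S"
  using MS4ext_ms4_axiom_instance[of "MImp (MBox mp) (MBox (MBox mp))" "\<lambda>_. a"]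
  by (simp add: ms4_axioms_def)

lemma MS4ext_all_K: "MImp (MAll (MImp a b)) (MImp (MAll a) (MAll b)) \<in> MS4ext S"
  using MS4ext_ms4_axiom_instance[of "MImp (MAll (MImp mp mq)) (MImp (MAll mp) (MAll mq))"
      "\<lambda>n. if n = 0 then a else b"]
  by (simp add: ms4_axioms_def)

lemma MS4ext_box_mono: "MImp a b \<in> MS4ext S \<Longrightarrow> MImp (MBox a) (MBox b) \<in> MS4ext S"
  by (blast intro: MS4ext.mp MS4ext.nec_box MS4ext_box_K)

lemma MS4ext_all_mono: "MImp a b \<in> MS4ext S \<Longrightarrow> MImp (MAll a) (MAll b) \<in> MS4ext S"
  by (blast intro: MS4ext.mp MS4ext.nec_all MS4ext_all_K)

lemma MS4ext_box_taut: "tautology (MImp a b) \<Longrightarrow> MImp (MBox a) (MBox b) \<in> MS4ext S"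
  by (intro MS4ext_box_mono MS4ext.taut)

lemma MS4ext_box_imp_boxI: "MImp (MBox a) b \<in> MS4ext S \<Longrightarrow> MImp (MBox a) (MBox b) \<in> MS4ext S"
  by (rule MS4ext_imp_trans[OF MS4ext_box_4 MS4ext_box_mono])

lemma MS4ext_dia_mono:
  assumes "MImp a b \<in> MS4ext S"
  shows "MImp (MDia a) (MDia b) \<in> MS4ext S"
proof -
  from assms have "MImp (MNeg b) (MNeg a) \<in> MS4ext S"
    by (rule MS4ext_taut_mp) (auto simp: tautology_def MNeg_def)
  then have "MImp (MBox (MNeg b)) (MBox (MNeg a)) \<in> MS4ext S"
    by (rule MS4ext_box_mono)
  then show ?thesis
    by (rule MS4ext_taut_mp) (auto simp: tautology_def MNeg_def MDia_def)
qed

lemma MS4ext_dia_dia: "MImp (MDia (MDia a)) (MDia a) \<in> MS4ext S"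
proof -
  have "MImp (MBox (MNeg a)) (MBox (MNeg (MNeg (MBox (MNeg a))))) \<in> MS4ext S"
    by (intro MS4ext_box_imp_boxI MS4ext_imp_trans[OF MS4ext_box_T] MS4ext.taut)
      (auto simp: tautology_def MNeg_def)
  then show ?thesis
    by (rule MS4ext_taut_mp) (auto simp: tautology_def MDia_def MNeg_def)
qed

lemma MS4ext_box_conj: "MImp (MBox a) (MImp (MBox b) (MBox (MAnd a b))) \<in> MS4ext S"
proof -
  have "MImp (MBox a) (MBox (MImp b (MAnd a b))) \<in> MS4ext S"
    by (rule MS4ext_box_taut) (auto simp: tautology_def)
  then show ?thesis using MS4ext_box_K by (rule MS4ext_imp_trans)
qed

lemma MS4ext_box_dia_conj: "MImp (MBox a) (MImp (MDia b) (MDia (MAnd a b))) \<in> MS4ext S"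
proof -
  have "MImp (MBox a) (MBox (MImp (MNeg (MAnd a b)) (MNeg b))) \<in> MS4ext S"
    by (rule MS4ext_box_taut) (auto simp: tautology_def MNeg_def)
  then have "MImp (MBox a) (MImp (MBox (MNeg (MAnd a b))) (MBox (MNeg b))) \<in> MS4ext S"
    using MS4ext_box_K by (rule MS4ext_imp_trans)
  then show ?thesis
    by (rule MS4ext_taut_mp) (auto simp: tautology_def MDia_def MNeg_def)
qed

lemma MS4ext_mckinsey:
  assumes grz: "grz_axiom \<in> MS4ext S"
  shows "MImp (MBox (MDia r)) (MDia (MBox r)) \<in> MS4ext S"
proof -
  define G where "G = MBox (MImp (MNeg r) (MBox (MNeg r)))"
  (* Grz at \<not>r, contraposed: every r-world sees an r-world satisfying G. There \<box>\<diamond>r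
    yields \<box>r, since by G a successor refuting r could never see r again. *)
  have grz_neg: "MImp (MBox (MImp G (MNeg r))) (MNeg r) \<in> MS4ext S"
    using MS4ext.subst[OF grz, of "\<lambda>_. MNeg r"] by (simp add: grz_axiom_def G_def)
  have "MImp (MBox (MNeg (MAnd G r))) (MBox (MImp G (MNeg r))) \<in> MS4ext S"
    by (rule MS4ext_box_taut) (auto simp: tautology_def MNeg_def)
  with grz_neg have "MImp r (MDia (MAnd G r)) \<in> MS4ext S"
    by (rule MS4ext_taut_mp2) (auto simp: tautology_def MNeg_def MDia_def)
  then have "MImp (MDia r) (MDia (MAnd G r)) \<in> MS4ext S"
    using MS4ext_dia_mono MS4ext_dia_dia MS4ext_imp_trans by blast
  then have "MImp (MBox (MDia r)) (MDia (MAnd G r)) \<in> MS4ext S"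
    using MS4ext_box_T by (rule MS4ext_imp_trans[rotated])
  moreover have "MImp (MBox (MDia r))
      (MImp (MDia (MAnd G r)) (MDia (MAnd (MBox (MDia r)) (MAnd G r)))) \<in> MS4ext S"
    using MS4ext_box_4 MS4ext_box_dia_conj by (rule MS4ext_imp_trans)
  ultimately have lift: "MImp (MBox (MDia r)) (MDia (MAnd (MBox (MDia r)) (MAnd G r))) \<in> MS4ext S"
    by (rule MS4ext_taut_mp2) (auto simp: tautology_def)
  have "MImp (MBox (MAnd (MDia r) (MImp (MNeg r) (MBox (MNeg r))))) (MBox r) \<in> MS4ext S"
    by (rule MS4ext_box_taut) (auto simp: tautology_def MNeg_def MDia_def)
  with MS4ext_box_conj[of "MDia r" "MImp (MNeg r) (MBox (MNeg r))"]
  have "MImp (MAnd (MBox (MDia r)) (MAnd G r)) (MBox r) \<in> MS4ext S"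
    unfolding G_def by (rule MS4ext_taut_mp2) (auto simp: tautology_def)
  with lift show ?thesis
    using MS4ext_dia_mono MS4ext_imp_trans by blast
qed

lemma gt_INeg [simp]: "gt (INeg a) = MBox (MOr (MNeg (gt a)) MBot)"
  by (simp add: INeg_def)

lemma MS4ext_gt_IImpI: "MImp (gt a) (gt b) \<in> MS4ext S \<Longrightarrow> gt (IImp a b) \<in> MS4ext S"
  by (simp add: MS4ext.nec_box MS4ext_taut_mp tautology_def MNeg_def)

lemma MS4ext_gt_not_not_imp_box_dia: "MImp (gt (INeg (INeg a))) (MBox (MDia (gt a))) \<in> MS4ext S"
proof -
  have "MImp (MBox (MNeg (gt a))) (MBox (MOr (MNeg (gt a)) MBot)) \<in> MS4ext S"
    by (rule MS4ext_box_taut) (auto simp: tautology_def)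
  then have "MImp (MOr (MNeg (MBox (MOr (MNeg (gt a)) MBot))) MBot) (MDia (gt a)) \<in> MS4ext S"
    by (rule MS4ext_taut_mp) (auto simp: tautology_def MDia_def MNeg_def)
  then show ?thesis by (simp add: MS4ext_box_mono)
qed

lemma MS4ext_box_dia_imp_gt_not_not: "MImp (MBox (MDia (gt a))) (gt (INeg (INeg a))) \<in> MS4ext S"
proof -
  have "MImp (MBox (MOr (MNeg (gt a)) MBot)) (MBox (MNeg (gt a))) \<in> MS4ext S"
    by (rule MS4ext_box_taut) (auto simp: tautology_def MNeg_def)
  then have "MImp (MDia (gt a)) (MOr (MNeg (MBox (MOr (MNeg (gt a)) MBot))) MBot) \<in> MS4ext S"
    by (rule MS4ext_taut_mp) (auto simp: tautology_def MDia_def MNeg_def)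
  then show ?thesis by (simp add: MS4ext_box_mono)
qed

lemma MS4ext_modal_kuroda:
  assumes grz: "grz_axiom \<in> MS4ext S" and kur: "kur_axiom \<in> MS4ext S"
  shows "MImp (MBox (MAll (MBox (MDia (MBox p))))) (MBox (MDia (MBox (MAll (MBox p))))) \<in> MS4ext S"
    (is "MImp ?H _ \<in> _")
proof -
  have "MImp (MBox (MDia (MBox p))) (MDia (MBox (MBox p))) \<in> MS4ext S"
    using MS4ext_box_T MS4ext_dia_mono[OF MS4ext_box_4] by (rule MS4ext_imp_trans)
  then have "MImp ?H (MBox (MAll (MDia (MBox (MBox p))))) \<in> MS4ext S"
    by (intro MS4ext_box_mono MS4ext_all_mono)
  moreover have "MImp (MBox (MAll (MDia (MBox (MBox p))))) (MDia (MAll (MBox p))) \<in> MS4ext S"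
    using MS4ext.subst[OF kur, of "\<lambda>_. MBox p"] by (simp add: kur_axiom_def)
  ultimately have "MImp ?H (MDia (MAll (MBox p))) \<in> MS4ext S"
    by (rule MS4ext_imp_trans)
  then have "MImp ?H (MBox (MDia (MAll (MBox p)))) \<in> MS4ext S"
    by (rule MS4ext_box_imp_boxI)
  then have "MImp ?H (MDia (MBox (MAll (MBox p)))) \<in> MS4ext S"
    using MS4ext_mckinsey[OF grz] by (rule MS4ext_imp_trans)
  then show ?thesis
    by (rule MS4ext_box_imp_boxI)
qed

lemma MS4ext_gt_kuroda:
  assumes grz: "grz_axiom \<in> MS4ext S" and kur: "kur_axiom \<in> MS4ext S"
  shows "gt kuroda \<in> MS4ext S"
proof -
  have "MImp (gt (IAll (INeg (INeg ip)))) (MBox (MAll (MBox (MDia (MBox mp))))) \<in> MS4ext S"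
    using MS4ext_gt_not_not_imp_box_dia[of ip] by (simp add: MS4ext_box_mono MS4ext_all_mono)
  moreover have "MImp (MBox (MAll (MBox (MDia (MBox mp))))) (MBox (MDia (gt (IAll ip)))) \<in> MS4ext S"
    using MS4ext_modal_kuroda[OF grz kur] by simp
  ultimately have "MImp (gt (IAll (INeg (INeg ip)))) (gt (INeg (INeg (IAll ip)))) \<in> MS4ext S"
    using MS4ext_box_dia_imp_gt_not_not by (blast intro: MS4ext_imp_trans)
  then show ?thesis
    unfolding kuroda_def by (rule MS4ext_gt_IImpI)
qed

theorem proposition5p5:
  shows "\<not> modal_companion_MIPC MGrz_join_LKur"
proof -
  have "grz_axiom \<in> MGrz_join_LKur" "kur_axiom \<in> MGrz_join_LKur"
    unfolding MGrz_join_LKur_def MGrz_def LKur_def by (blast intro: MS4ext.extra)+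
  then have "gt kuroda \<in> MGrz_join_LKur"
    unfolding MGrz_join_LKur_def by (rule MS4ext_gt_kuroda)
  with kuroda_notin_MIPC show ?thesis
    unfolding modal_companion_MIPC_def by blast
qed

end
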